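(* For any binary classification task (finite dataset $S$ of $n$ labeled points, hypothesis class $H$ of finite VC dimension), the algorithm described in the context executes its main loop at most $\log_2(2n)$ times.
   Context: $D_S(h,h')=\frac1n\sum_{x\in S}\mathbb{I}(h(x)\ne h'(x))$, $B_H(h,r)=\{h'\in H:D_S(h,h')\le r\}$, $\mathrm{DIS}(V)=\{x\in S:\exists h_1,h_2\in V,h_1(x)\ne h_2(x)\}$, $\theta=\sup_{h\in H}\sup_{r>0}\frac{|\mathrm{DIS}(B_H(h,r))|}{rn}$, $V_H$ the VC dimension, $\mathrm{radius}(V)=\min\{r:\exists h'\in V,V\subseteq B_H(h',r)\}$. Classifiers are identified with their labelings of $S$. LB/UB: for a uniformly random subset $S''$ of size $m$ with queried labels and confidence $\delta_0$, $\mathrm{LB}=\widehat{\mathrm{err}}(h)-\gamma$, $\mathrm{UB}=\widehat{\mathrm{err}}(h)+\gamma$ with $\widehat{\mathrm{err}}$ the empirical error on $S''$ and $m=\frac{64}{\gamma^2}(2V_H\ln\frac{12}\gamma+\ln\frac4{\delta_0})$. Algorithm (constants $c_1,b_1,c_2,b_2$): $\delta'=\delta/(2\log_2(2n))$, $H_0=H$, $r_0=1$, $i=0$. While $|H_i|>1$: draw a uniformly random $S_i\subseteq\mathrm{DIS}(H_i)$ of size $c_1\theta^2(V_H\ln\theta+\ln\frac1{\delta'})+b_1$, query labels; $\beta=\min_{h\in H_i}\mathrm{UB}(S_i,h,\delta')$; $H_{i+1}=\{h\in H_i:\mathrm{LB}(S_i,h,\delta')\le\beta\}$; $r_{i+1}=\mathrm{radius}(H_{i+1})$;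 if $r_{i+1}>r_i/2$, draw a uniformly random $S'\subseteq\mathrm{DIS}(H_i)$ of size $\frac{c_2\theta^2}{\epsilon^2}(V_H\ln\frac\theta\epsilon+\ln\frac1\delta)+b_2$ and return $\arg\min_{h\in H_i}\mathrm{UB}(S',h,\delta/2)$; else $i\leftarrow i+1$. Finally return the remaining classifier. *)

theory Defs
  imports Complex_Main
begin

text \<open>Classifiers are identified with their labelings of the finite data set S
  (functions 'a => bool that are False outside S). y is the true labeling.\<close>

definition dist_S :: "'a set \<Rightarrow> ('a \<Rightarrow> bool) \<Rightarrow> ('a \<Rightarrow> bool) \<Rightarrow> real" where
  "dist_S S h h' = real (card {x\<in>S. h x \<noteq> h' x}) / real (card S)"

definition ballH :: "'a set \<Rightarrow> ('a \<Rightarrow> bool) set \<Rightarrow> ('a \<Rightarrow> bool) \<Rightarrow> real \<Rightarrow> ('a \<Rightarrow> bool) set" where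
  "ballH S H h r = {h'\<in>H. dist_S S h h' \<le> r}"

definition DIS :: "'a set \<Rightarrow> ('a \<Rightarrow> bool) set \<Rightarrow> 'a set" where
  "DIS S V = {x\<in>S. \<exists>h1\<in>V. \<exists>h2\<in>V. h1 x \<noteq> h2 x}"

definition radius :: "'a set \<Rightarrow> ('a \<Rightarrow> bool) set \<Rightarrow> real" where
  "radius S V = (LEAST r. \<exists>h'\<in>V. V \<subseteq> ballH S V h' r)"

definition emp_err :: "'a set \<Rightarrow> ('a \<Rightarrow> bool) \<Rightarrow> ('a \<Rightarrow> bool) \<Rightarrow> real" where
  "emp_err T y h = (if T = {} then 0 else real (card {x\<in>T. h x \<noteq> y x}) / real (card T))"

definition LB :: "'a set \<Rightarrow> ('a \<Rightarrow> bool) \<Rightarrow> real \<Rightarrow> ('a \<Rightarrow> bool) \<Rightarrow> real" where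
  "LB T y \<gamma> h = emp_err T y h - \<gamma>"

definition UB :: "'a set \<Rightarrow> ('a \<Rightarrow> bool) \<Rightarrow> real \<Rightarrow> ('a \<Rightarrow> bool) \<Rightarrow> real" where
  "UB T y \<gamma> h = emp_err T y h + \<gamma>"

text \<open>Version spaces H_i of the main loop, for a given outcome of the random samples
  T i (the sample S_i drawn in iteration i) and confidence widths g i (the gamma
  used by LB/UB in iteration i).\<close>
primrec Hseq :: "('a \<Rightarrow> bool) set \<Rightarrow> ('a \<Rightarrow> bool) \<Rightarrow> (nat \<Rightarrow> 'a set) \<Rightarrow> (nat \<Rightarrow> real)
                   \<Rightarrow> nat \<Rightarrow> ('a \<Rightarrow> bool) set" where
  "Hseq H y T g 0 = H"
| "Hseq H y T g (Suc i) =
     (let V = Hseq H y T g i;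
          \<beta> = Min (UB (T i) y (g i) ` V)
      in {h\<in>V. LB (T i) y (g i) h \<le> \<beta>})"

definition rseq :: "'a set \<Rightarrow> ('a \<Rightarrow> bool) set \<Rightarrow> ('a \<Rightarrow> bool) \<Rightarrow> (nat \<Rightarrow> 'a set) \<Rightarrow> (nat \<Rightarrow> real)
                     \<Rightarrow> nat \<Rightarrow> real" where
  "rseq S H y T g i = (if i = 0 then 1 else radius S (Hseq H y T g i))"

text \<open>Iteration i of the main loop is executed iff the loop condition |H_i| > 1 holds
  and no earlier iteration j < i terminated (neither by |H_j| \<le> 1 nor by the early
  return r_{j+1} > r_j / 2).\<close>
definition loop_executed :: "'a set \<Rightarrow> ('a \<Rightarrow> bool) set \<Rightarrow> ('a \<Rightarrow> bool) \<Rightarrow> (nat \<Rightarrow> 'a set)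
                              \<Rightarrow> (nat \<Rightarrow> real) \<Rightarrow> nat \<Rightarrow> bool" where
  "loop_executed S H y T g i \<longleftrightarrow>
     card (Hseq H y T g i) > 1 \<and>
     (\<forall>j<i. card (Hseq H y T g j) > 1 \<and> rseq S H y T g (Suc j) \<le> rseq S H y T g j / 2)"

end

theory Submission
  imports Defs
begin

text \<open>Two distinct classifiers differ somewhere, necessarily on S, so their distance is at
  least 1/n; hence every version space with at least two classifiers has radius at least 1/n.
  As long as the loop runs, the radius at least halves in each iteration starting from r_0 = 1,
  so after i iterations 1/n \<le> r_i \<le> 2^(-i), i.e. 2^i \<le> n. Nothing about the samples or the
  confidence widths is needed.\<close>

lemma dist_S_ge_inverse_card:
  assumes "finite S" and "h \<noteq> h'"
    and "\<forall>x. x \<notin> S \<longrightarrow> \<not> h x" and "\<forall>x. x \<notin> S \<longrightarrow> \<not> h' x"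
  shows "1 / real (card S) \<le> dist_S S h h'"
proof -
  obtain x where "h x \<noteq> h' x" using \<open>h \<noteq> h'\<close> by blast
  with assms(3,4) have "x \<in> {x\<in>S. h x \<noteq> h' x}" by blast
  with \<open>finite S\<close> have "0 < card {x\<in>S. h x \<noteq> h' x}"
    by (auto simp: card_gt_0_iff)
  then show ?thesis unfolding dist_S_def by (simp add: divide_right_mono)
qed

lemma subset_ballH_iff:
  assumes "finite V" and "V \<noteq> {}"
  shows "V \<subseteq> ballH S V h r \<longleftrightarrow> (MAX h'\<in>V. dist_S S h h') \<le> r"
  using assms by (auto simp: ballH_def)

lemma radius_eq_Min_Max:
  assumes "finite V" and "V \<noteq> {}"
  shows "radius S V = (MIN h\<in>V. MAX h'\<in>V. dist_S S h h')"
proof -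
  let ?m = "MIN h\<in>V. MAX h'\<in>V. dist_S S h h'"
  have "?m \<in> (\<lambda>h. MAX h'\<in>V. dist_S S h h') ` V"
    using assms by (intro Min_in) auto
  then obtain h where "h \<in> V" and "(MAX h'\<in>V. dist_S S h h') = ?m"
    by (metis (no_types, lifting) imageE)
  then have attained: "\<exists>h\<in>V. V \<subseteq> ballH S V h ?m"
    using assms by (metis subset_ballH_iff order_refl)
  have "?m \<le> r" if "\<exists>h\<in>V. V \<subseteq> ballH S V h r" for r
  proof -
    from that obtain h where "h \<in> V" and "(MAX h'\<in>V. dist_S S h h') \<le> r"
      using assms by (auto simp: subset_ballH_iff)
    moreover have "?m \<le> (MAX h'\<in>V. dist_S S h h')"
      using \<open>finite V\<close> \<open>h \<in> V\<close> by (intro Min_le) auto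
    ultimately show ?thesis by linarith
  qed
  with attained show ?thesis
    unfolding radius_def by (intro Least_equality) auto
qed

lemma radius_ge_inverse_card:
  assumes "finite S" and "card V > 1" and "\<forall>h\<in>V. \<forall>x. x \<notin> S \<longrightarrow> \<not> h x"
  shows "1 / real (card S) \<le> radius S V"
proof -
  have "finite V" and "V \<noteq> {}"
    using \<open>card V > 1\<close> by (auto intro: ccontr)
  have "1 / real (card S) \<le> (MAX h'\<in>V. dist_S S h h')" if "h \<in> V" for h
  proof -
    obtain h' where "h' \<in> V" and "h' \<noteq> h"
      using \<open>card V > 1\<close> \<open>h \<in> V\<close> \<open>finite V\<close> by (metis card_le_Suc0_iff_eq not_le One_nat_def)
    then have "1 / real (card S) \<le> dist_S S h h'"
      using assms \<open>h \<in> V\<close> by (intro dist_S_ge_inverse_card) auto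
    also have "\<dots> \<le> (MAX h'\<in>V. dist_S S h h')"
      using \<open>finite V\<close> \<open>h' \<in> V\<close> by (intro Max_ge) auto
    finally show ?thesis .
  qed
  then show ?thesis
    using \<open>finite V\<close> \<open>V \<noteq> {}\<close> by (simp add: radius_eq_Min_Max)
qed

lemma halving_le_divide_power:
  fixes r :: "nat \<Rightarrow> real"
  assumes "r 0 \<le> c" and "\<forall>j<i. r (Suc j) \<le> r j / 2"
  shows "r i \<le> c / 2 ^ i"
  using assms(2)
proof (induction i)
  case 0
  then show ?case using assms(1) by simp
next
  case (Suc i)
  then have "r (Suc i) \<le> r i / 2" by simp
  also have "\<dots> \<le> (c / 2 ^ i) / 2" using Suc by simp
  finally show ?case by simp
qed

lemma Hseq_subset: "Hseq H y T g k \<subseteq> H"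
  by (induction k) (auto simp: Let_def)

lemma rseq_ge_inverse_card:
  assumes "finite S" and "S \<noteq> {}" and "\<forall>h\<in>H. \<forall>x. x \<notin> S \<longrightarrow> \<not> h x"
    and "card (Hseq H y T g i) > 1"
  shows "1 / real (card S) \<le> rseq S H y T g i"
proof (cases "i = 0")
  case True
  with assms(1,2) show ?thesis by (simp add: rseq_def Suc_leI card_gt_0_iff)
next
  case False
  have "\<forall>h\<in>Hseq H y T g i. \<forall>x. x \<notin> S \<longrightarrow> \<not> h x"
    using assms(3) Hseq_subset by blast
  then have "1 / real (card S) \<le> radius S (Hseq H y T g i)"
    using assms(1,4) by (intro radius_ge_inverse_card)
  with False show ?thesis by (simp add: rseq_def)
qed

theorem lemma10:
  fixes S :: "'a set" and H :: "('a \<Rightarrow> bool) set" and y :: "'a \<Rightarrow> bool"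
    and T :: "nat \<Rightarrow> 'a set" and g :: "nat \<Rightarrow> real" and i :: nat
  assumes "finite S" and "S \<noteq> {}"
    and "H \<noteq> {}"
    and "\<forall>h\<in>H. \<forall>x. x \<notin> S \<longrightarrow> \<not> h x"
    and "\<forall>x. x \<notin> S \<longrightarrow> \<not> y x"
    and "\<forall>j. T j \<subseteq> DIS S (Hseq H y T g j)"
    and "\<forall>j. g j \<ge> 0"
    and "loop_executed S H y T g i"
  shows "real (Suc i) \<le> log 2 (2 * real (card S))"
proof -
  have halving: "\<forall>j<i. rseq S H y T g (Suc j) \<le> rseq S H y T g j / 2"
    and "card (Hseq H y T g i) > 1"
    using assms(8) by (auto simp: loop_executed_def)
  then have "1 / real (card S) \<le> rseq S H y T g i"
    using assms(1,2,4) by (intro rseq_ge_inverse_card)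
  also have "\<dots> \<le> 1 / 2 ^ i"
    using halving by (intro halving_le_divide_power) (simp add: rseq_def)
  finally have "real (2 ^ i) \<le> real (card S)"
    using inverse_le_imp_le[of "real (card S)" "2 ^ i"] assms(1,2)
    by (simp add: inverse_eq_divide card_gt_0_iff)
  then have "2 ^ Suc i \<le> 2 * card S" by simp
  from le_log2_of_power[OF this] show ?thesis by simp
qed

end
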